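(* Let $p=3$, $a\in\mathbb{C}_3$, $a\ne0$, $A=|a|_3$, $f(x)=\frac{ax}{x^2+a}$, and $t_1=\sqrt{-2a}$, $t_2=-\sqrt{-2a}$. Let $0<r<\sqrt A$. Then: (a) for every $x\in S_r(t_1)\setminus\mathcal P_2$, $\lim_{n\to\infty}f^{2n}(x)=t_1$ and $\lim_{n\to\infty}f^{2n+1}(x)=t_2$; (b) for every $x\in S_r(t_2)\setminus\mathcal P_2$, $\lim_{n\to\infty}f^{2n}(x)=t_2$ and $\lim_{n\to\infty}f^{2n+1}(x)=t_1$.
   Context: $S_r(t)=\{x\in\mathbb{C}_3:|x-t|_3=r\}$. $\mathcal P_2=\{x\in\mathbb{C}_p:\exists n\in\mathbb{N},\ f^n(x)\in\{\pm\sqrt{-a},\ \pm\sqrt{(-3\pm\sqrt5)a/2}\}\}$ (the points whose orbit reaches a singularity of $f$ or $f\circ f$). The points $t_1,t_2$ form a $2$-cycle of $f$. *)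

theory Defs
  imports Complex_Main "HOL-Computational_Algebra.Polynomial" "HOL-Computational_Algebra.Primes"
begin

text \<open>We characterise C_3 abstractly:
  a field of characteristic 0 carrying an absolute value nrm which is multiplicative,
  non-archimedean (ultrametric), restricts to the 3-adic absolute value on the integers,
  is complete, and such that the field is algebraically closed.\<close>

definition cp_field :: "nat \<Rightarrow> ('a::field_char_0 \<Rightarrow> real) \<Rightarrow> bool" where
  "cp_field p nrm \<longleftrightarrow>
     prime p \<and>
     (\<forall>x. nrm x \<ge> 0) \<and> (\<forall>x. nrm x = 0 \<longleftrightarrow> x = 0) \<and>
     (\<forall>x y. nrm (x * y) = nrm x * nrm y) \<and>
     (\<forall>x y. nrm (x + y) \<le> max (nrm x) (nrm y)) \<and>
     (\<forall>n::int. n \<noteq> 0 \<longrightarrow> nrm (of_int n) = real p powr (- real (multiplicity (int p) n))) \<and>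
     (\<forall>s::nat \<Rightarrow> 'a. (\<forall>e>0. \<exists>N. \<forall>m\<ge>N. \<forall>n\<ge>N. nrm (s m - s n) < e)
          \<longrightarrow> (\<exists>l. \<forall>e>0. \<exists>N. \<forall>n\<ge>N. nrm (s n - l) < e)) \<and>
     (\<forall>q::'a poly. degree q > 0 \<longrightarrow> (\<exists>x. poly q x = 0))"

definition sphere_nrm :: "('a::field \<Rightarrow> real) \<Rightarrow> 'a \<Rightarrow> real \<Rightarrow> 'a set" where
  "sphere_nrm nrm t r = {x. nrm (x - t) = r}"

definition conv_nrm :: "('a::field \<Rightarrow> real) \<Rightarrow> (nat \<Rightarrow> 'a) \<Rightarrow> 'a \<Rightarrow> bool" where
  "conv_nrm nrm s l \<longleftrightarrow> (\<forall>e>0. \<exists>N. \<forall>n\<ge>N. nrm (s n - l) < e)"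

definition fmap :: "'a::field \<Rightarrow> 'a \<Rightarrow> 'a" where
  "fmap a x = a * x / (x^2 + a)"

text \<open>Singularities of f and f o f: \<plusminus>sqrt(-a), \<plusminus>sqrt((-3\<plusminus>sqrt 5) a / 2).\<close>
definition sing2 :: "'a::field \<Rightarrow> 'a set" where
  "sing2 a = {s. s^2 = - a \<or> (\<exists>w. w^2 = 5 \<and> s^2 = (-3 + w) * a / 2)}"

definition P2 :: "'a::field \<Rightarrow> 'a set" where
  "P2 a = {x. \<exists>n. (fmap a ^^ n) x \<in> sing2 a}"

end

theory Submission
  imports Defs
begin

text \<open>Write \<open>x = t + h\<close> with \<open>t\<^sup>2 = -2a\<close>. Then \<open>x\<^sup>2 + a = -a + h(2t + h)\<close> and
  \<open>f(x) + t = h(th - 3a)/(x\<^sup>2 + a)\<close>. For \<open>|h| \<le> r < \<surd>|a|\<close> the ultrametric inequality gives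
  \<open>|x\<^sup>2 + a| = |a|\<close> and \<open>|th - 3a| \<le> |a| max(r/\<surd>|a|, |3|)\<close>, so f maps the closed disc of radius
  r about t into the one about -t, contracting distances to the cycle by the factor
  \<open>q = max(r/\<surd>|a|, 1/3) < 1\<close>. Hence \<open>|f\<^sup>n(x) - (-1)\<^sup>n t| \<le> r q\<^sup>n\<close>. Along such orbits the
  denominator never vanishes.\<close>

locale ultrametric_abs =
  fixes nrm :: "'a::field \<Rightarrow> real"
  assumes nrm_nonneg: "nrm x \<ge> 0"
    and nrm_eq_0_iff: "nrm x = 0 \<longleftrightarrow> x = 0"
    and nrm_mult: "nrm (x * y) = nrm x * nrm y"
    and nrm_add_le_max: "nrm (x + y) \<le> max (nrm x) (nrm y)"
begin

lemma nrm_zero [simp]: "nrm 0 = 0"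
  using nrm_eq_0_iff by simp

lemma nrm_one: "nrm 1 = 1"
  using nrm_mult[of 1 1] nrm_eq_0_iff[of 1] by simp

lemma nrm_minus: "nrm (- x) = nrm x"
proof -
  have "(nrm (-1))\<^sup>2 = 1"
    using nrm_mult[of "-1" "-1"] nrm_one by (simp add: power2_eq_square)
  then have "nrm (-1) = 1"
    using nrm_nonneg[of "-1"] by (auto simp: power2_eq_1_iff)
  then show ?thesis
    using nrm_mult[of "-1" x] by simp
qed

lemma nrm_divide: "nrm (x / y) = nrm x / nrm y"
proof (cases "y = 0")
  case False
  then show ?thesis
    using nrm_mult[of "x / y" y] nrm_eq_0_iff[of y] by (simp add: field_simps)
qed simp

lemma nrm_add_eq_if_less:
  assumes "nrm y < nrm x"
  shows "nrm (x + y) = nrm x"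
proof (rule antisym)
  show "nrm (x + y) \<le> nrm x"
    using nrm_add_le_max[of x y] assms by simp
  have "nrm x \<le> max (nrm (x + y)) (nrm y)"
    using nrm_add_le_max[of "x + y" "- y"] nrm_minus[of y] by simp
  then show "nrm x \<le> nrm (x + y)"
    using assms by (simp add: le_max_iff_disj)
qed

lemma conv_nrm_if_geometric_bound:
  assumes bound: "\<And>n. nrm (s n - l) \<le> C * q ^ n" and "0 \<le> q" "q < 1"
  shows "conv_nrm nrm s l"
  unfolding conv_nrm_def
proof (intro allI impI)
  fix e :: real
  assume "e > 0"
  have "(\<lambda>n. C * q ^ n) \<longlonglongrightarrow> 0"
    using assms(2,3) by (intro tendsto_mult_right_zero LIMSEQ_power_zero) auto
  then obtain N where "\<forall>n\<ge>N. \<bar>C * q ^ n\<bar> < e"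
    using \<open>e > 0\<close> by (auto simp: lim_sequentially)
  then show "\<exists>N. \<forall>n\<ge>N. nrm (s n - l) < e"
    using bound by (meson abs_ge_self le_less_trans)
qed

end

lemma cp_field_ultrametric_abs: "cp_field p nrm \<Longrightarrow> ultrametric_abs nrm"
  unfolding cp_field_def by unfold_locales auto

lemma cp_field_3_nrm_of_int:
  assumes "cp_field 3 (nrm :: 'a::field_char_0 \<Rightarrow> real)"
  shows "nrm 2 = 1" and "nrm 3 = 1 / 3"
proof -
  have int: "nrm (of_int n) = 3 powr (- real (multiplicity 3 n))" if "n \<noteq> 0" for n
    using assms that unfolding cp_field_def by simp
  have "multiplicity (3::int) 2 = 0"
    by (rule not_dvd_imp_multiplicity_0) simp
  then show "nrm 2 = 1"
    using int[of 2] by simp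
  have "multiplicity (3::int) 3 = 1"
    by (rule multiplicity_self) auto
  then show "nrm 3 = 1 / 3"
    using int[of 3] by (simp add: powr_minus)
qed

lemma fmap_identities_near_cycle:
  fixes a t h :: "'a::field"
  assumes "t\<^sup>2 = -2 * a"
  shows "(t + h)\<^sup>2 + a = - a + h * (2 * t + h)"
    and "a * (t + h) + t * ((t + h)\<^sup>2 + a) = h * (t * h - 3 * a)"
proof -
  have t: "t * t + 2 * a = 0"
    using assms by (simp add: power2_eq_square)
  have "(t + h)\<^sup>2 + a - (- a + h * (2 * t + h)) = t * t + 2 * a"
    by (simp add: power2_eq_square algebra_simps)
  then show "(t + h)\<^sup>2 + a = - a + h * (2 * t + h)"
    using t by (metis right_minus_eq)
  have "a * (t + h) + t * ((t + h)\<^sup>2 + a) - h * (t * h - 3 * a) = (t + 2 * h) * (t * t + 2 * a)"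
    by (simp add: power2_eq_square algebra_simps)
  then show "a * (t + h) + t * ((t + h)\<^sup>2 + a) = h * (t * h - 3 * a)"
    using t by (metis mult_zero_right right_minus_eq)
qed

context ultrametric_abs
begin

lemma fmap_contracts_to_cycle:
  assumes "nrm 2 = 1" and "a \<noteq> 0" and t: "t\<^sup>2 = -2 * a"
    and r: "r < sqrt (nrm a)" and hx: "nrm (x - t) \<le> r"
  shows "nrm (fmap a x - (- t)) \<le> max (r / sqrt (nrm a)) (nrm 3) * nrm (x - t)"
proof -
  define h where "h = x - t"
  define s where "s = sqrt (nrm a)"
  define q where "q = max (r / s) (nrm 3)"
  have "nrm a > 0"
    using \<open>a \<noteq> 0\<close> nrm_nonneg[of a] nrm_eq_0_iff[of a] by linarith
  then have "s > 0" and ss: "s * s = nrm a"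
    unfolding s_def by simp_all
  have x: "x = t + h"
    unfolding h_def by simp
  have h_le: "nrm h \<le> r"
    using hx h_def by simp
  have "nrm t * nrm t = nrm a"
    using t nrm_mult[of t t] nrm_mult[of "-2" a] nrm_minus[of 2] \<open>nrm 2 = 1\<close>
    by (simp add: power2_eq_square)
  then have nrm_t: "nrm t = s"
    using nrm_nonneg[of t] unfolding s_def by (metis real_sqrt_mult_self abs_of_nonneg real_sqrt_abs2)
  have "nrm (2 * t + h) \<le> s"
    using nrm_add_le_max[of "2 * t" h] nrm_mult[of 2 t] \<open>nrm 2 = 1\<close> nrm_t h_le r s_def by simp
  then have "nrm (h * (2 * t + h)) \<le> r * s"
    using h_le mult_mono[of "nrm h" r "nrm (2 * t + h)" s] nrm_nonneg[of h] nrm_nonneg[of "2 * t + h"]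
    by (simp add: nrm_mult)
  also have "\<dots> < s * s"
    using r \<open>s > 0\<close> unfolding s_def by (intro mult_strict_right_mono)
  also have "\<dots> = nrm (- a)"
    using ss nrm_minus by simp
  finally have "nrm (- a + h * (2 * t + h)) = nrm (- a)"
    by (rule nrm_add_eq_if_less)
  then have den: "nrm (x\<^sup>2 + a) = nrm a"
    unfolding x fmap_identities_near_cycle(1)[OF t] nrm_minus .
  have "nrm (t * h - 3 * a) \<le> max (s * nrm h) (nrm 3 * nrm a)"
    using nrm_add_le_max[of "t * h" "- (3 * a)"] nrm_minus nrm_mult nrm_t by simp
  also have "\<dots> \<le> nrm a * q"
  proof -
    have "s * nrm h \<le> s * r"
      using h_le \<open>s > 0\<close> by simp
    also have "\<dots> = nrm a * (r / s)"
      unfolding ss[symmetric] using \<open>s > 0\<close> by simp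
    finally have "s * nrm h \<le> nrm a * (r / s)" .
    moreover have "nrm a * (r / s) \<le> nrm a * q"
      unfolding q_def using \<open>nrm a > 0\<close> by (intro mult_left_mono) auto
    moreover have "nrm 3 * nrm a \<le> nrm a * q"
      unfolding q_def using \<open>nrm a > 0\<close> by (subst mult.commute, intro mult_left_mono) auto
    ultimately show ?thesis
      by simp
  qed
  finally have num: "nrm (t * h - 3 * a) \<le> nrm a * q" .
  have "x\<^sup>2 + a \<noteq> 0"
    using den \<open>nrm a > 0\<close> by auto
  then have "fmap a x - (- t) = (a * x + t * (x\<^sup>2 + a)) / (x\<^sup>2 + a)"
    unfolding fmap_def by (simp add: field_simps)
  then have "nrm (fmap a x - (- t)) = nrm h * nrm (t * h - 3 * a) / nrm a"
    using fmap_identities_near_cycle(2)[OF t] x den nrm_divide nrm_mult by simp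
  also have "\<dots> \<le> nrm h * (nrm a * q) / nrm a"
    using num nrm_nonneg \<open>nrm a > 0\<close> by (intro divide_right_mono mult_left_mono) auto
  finally show ?thesis
    using \<open>nrm a > 0\<close> unfolding q_def s_def h_def by (simp add: mult.commute)
qed

lemma fmap_orbit_near_cycle:
  assumes "nrm 2 = 1" and "nrm 3 < 1" and "a \<noteq> 0" and t: "t\<^sup>2 = -2 * a"
    and "0 \<le> r" and r: "r < sqrt (nrm a)" and hx: "nrm (x - t) \<le> r"
  defines "q \<equiv> max (r / sqrt (nrm a)) (nrm 3)"
  shows "nrm ((fmap a ^^ n) x - (-1) ^ n * t) \<le> r * q ^ n"
proof (induction n)
  case 0
  then show ?case using hx by simp
next
  case (Suc n)
  have "r / sqrt (nrm a) < 1"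
    using \<open>0 \<le> r\<close> r nrm_nonneg[of a] by (simp add: divide_less_eq)
  then have "0 \<le> q" "q < 1"
    using \<open>nrm 3 < 1\<close> nrm_nonneg[of 3] unfolding q_def by auto
  then have "r * q ^ n \<le> r"
    using \<open>0 \<le> r\<close> by (simp add: mult_left_le power_le_one)
  moreover have "((-1) ^ n * t)\<^sup>2 = -2 * a"
    using t by (simp add: power_mult_distrib flip: power_mult)
  ultimately have "nrm (fmap a ((fmap a ^^ n) x) - (- ((-1) ^ n * t)))
      \<le> q * nrm ((fmap a ^^ n) x - (-1) ^ n * t)"
    using fmap_contracts_to_cycle[OF \<open>nrm 2 = 1\<close> \<open>a \<noteq> 0\<close> _ r] Suc q_def by force
  also have "\<dots> \<le> q * (r * q ^ n)"
    using Suc \<open>0 \<le> q\<close> by (simp add: mult_left_mono)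
  finally show ?case
    by (simp add: algebra_simps)
qed

end

lemma fmap_orbit_converges_to_cycle:
  fixes nrm :: "'a::field_char_0 \<Rightarrow> real"
  assumes cp: "cp_field 3 nrm" and "a \<noteq> 0" and t: "t\<^sup>2 = -2 * a"
    and "0 < r" and r: "r < sqrt (nrm a)" and hx: "nrm (x - t) = r"
  shows "conv_nrm nrm (\<lambda>n. (fmap a ^^ (2 * n)) x) t
    \<and> conv_nrm nrm (\<lambda>n. (fmap a ^^ (2 * n + 1)) x) (- t)"
proof -
  interpret ultrametric_abs nrm
    using cp by (rule cp_field_ultrametric_abs)
  define q where "q = max (r / sqrt (nrm a)) (nrm 3)"
  have nrm23: "nrm 2 = 1" "nrm 3 = 1 / 3"
    using cp_field_3_nrm_of_int[OF cp] by auto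
  have "r / sqrt (nrm a) < 1"
    using \<open>0 < r\<close> r nrm_nonneg[of a] by (simp add: divide_less_eq)
  then have "0 \<le> q" "q < 1"
    using nrm23 unfolding q_def by auto
  have "nrm (3::'a) < 1"
    using nrm23 by simp
  have orbit: "nrm ((fmap a ^^ n) x - (-1) ^ n * t) \<le> r * q ^ n" for n
    using fmap_orbit_near_cycle[OF nrm23(1) \<open>nrm 3 < 1\<close> \<open>a \<noteq> 0\<close> t _ r] hx \<open>0 < r\<close>
    unfolding q_def by simp
  have even: "nrm ((fmap a ^^ (2 * n)) x - t) \<le> r * (q\<^sup>2) ^ n" for n
    using orbit[of "2 * n"] by (simp add: power_mult)
  have odd: "nrm ((fmap a ^^ (2 * n + 1)) x - (- t)) \<le> (r * q) * (q\<^sup>2) ^ n" for n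
    using orbit[of "2 * n + 1"] by (simp add: power_mult mult.assoc)
  have "0 \<le> q\<^sup>2" "q\<^sup>2 < 1"
    using \<open>0 \<le> q\<close> \<open>q < 1\<close> by (simp_all add: power_less_one_iff)
  then show ?thesis
    using conv_nrm_if_geometric_bound[OF even] conv_nrm_if_geometric_bound[OF odd] by simp
qed

theorem theorem4p3:
  fixes nrm :: "'a::field_char_0 \<Rightarrow> real" and a t1 t2 :: 'a and r :: real
  assumes "cp_field 3 nrm"
    and "a \<noteq> 0"
    and "t1^2 = -2 * a" and "t2 = - t1"
    and "0 < r" and "r < sqrt (nrm a)"
  shows "(\<forall>x \<in> sphere_nrm nrm t1 r - P2 a.
            conv_nrm nrm (\<lambda>n. (fmap a ^^ (2*n)) x) t1 \<and>
            conv_nrm nrm (\<lambda>n. (fmap a ^^ (2*n+1)) x) t2)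
       \<and> (\<forall>x \<in> sphere_nrm nrm t2 r - P2 a.
            conv_nrm nrm (\<lambda>n. (fmap a ^^ (2*n)) x) t2 \<and>
            conv_nrm nrm (\<lambda>n. (fmap a ^^ (2*n+1)) x) t1)"
proof -
  have "t2^2 = -2 * a"
    using assms(3,4) by simp
  note cycle1 = fmap_orbit_converges_to_cycle[OF assms(1,2,3,5,6)]
   and cycle2 = fmap_orbit_converges_to_cycle[OF assms(1,2) \<open>t2^2 = -2 * a\<close> assms(5,6)]
  show ?thesis
    using cycle1 cycle2 \<open>t2 = - t1\<close> unfolding sphere_nrm_def by (simp del: funpow.simps)
qed

end
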